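(* Let $n\ge2$ and let $\Lambda:B(\mathcal{H}_n)\to B(\mathcal{H}_m)$ be a positive linear map. Then $\Lambda$ is $2$-positive if and only if $(\mathbf{1}_2\otimes\Lambda)(|\Psi^\beta\rangle\langle\Psi^\beta|)\ge0$ for all vectors $|\Psi^\beta\rangle=|0\rangle|\beta_0\rangle+|1\rangle|\beta_1\rangle\in\mathcal{H}_2\otimes\mathcal{H}_n$ with $|\beta_0\rangle,|\beta_1\rangle$ orthonormal.
   Context: $B(\mathcal{H}_n)$ is the algebra of operators on an $n$-dimensional Hilbert space; $\{|0\rangle,|1\rangle\}$ is an orthonormal basis of $\mathcal{H}_2$. A linear map $\Lambda$ is positive if it maps positive semidefinite operators to positive semidefinite operators, and $2$-positive if $\mathbf{1}_2\otimes\Lambda$ is positive, where $\mathbf{1}_2$ is the identity map on $B(\mathcal{H}_2)$. *)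

theory Defs
  imports "HOL-Analysis.Analysis"
begin

text \<open>Operators on a finite-dimensional Hilbert space with orthonormal basis indexed
  by the finite type 'n are represented as complex matrices complex^'n^'n.\<close>

definition cinner :: "complex^'n \<Rightarrow> complex^'n \<Rightarrow> complex" where
  "cinner x y = (\<Sum>i\<in>UNIV. cnj (x $ i) * y $ i)"

definition psd :: "complex^'n^'n \<Rightarrow> bool" where
  "psd A \<longleftrightarrow> (\<forall>x::complex^'n. let q = (\<Sum>i\<in>UNIV. \<Sum>j\<in>UNIV. cnj (x $ i) * A $ i $ j * x $ j)
                 in Im q = 0 \<and> Re q \<ge> 0)"

definition mscale :: "complex \<Rightarrow> complex^'n^'k \<Rightarrow> complex^'n^'k" where
  "mscale c A = (\<chi> i j. c * A $ i $ j)"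

definition clinear_map :: "(complex^'n^'n \<Rightarrow> complex^'m^'m) \<Rightarrow> bool" where
  "clinear_map L \<longleftrightarrow> (\<forall>A B. L (A + B) = L A + L B) \<and> (\<forall>c A. L (mscale c A) = mscale c (L A))"

definition positive_map :: "(complex^'n^'n \<Rightarrow> complex^'m^'m) \<Rightarrow> bool" where
  "positive_map L \<longleftrightarrow> (\<forall>A. psd A \<longrightarrow> psd (L A))"

text \<open>The map id_2 \<otimes> L on B(H_2 \<otimes> H_n), with H_2 \<otimes> H_n indexed by 2 \<times> 'n:
  a block operator (X_ab) is sent to (L X_ab).\<close>
definition id2_tensor :: "(complex^'n^'n \<Rightarrow> complex^'m^'m)
    \<Rightarrow> complex^(2 \<times> 'n)^(2 \<times> 'n) \<Rightarrow> complex^(2 \<times> 'm)^(2 \<times> 'm)" where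
  "id2_tensor L X = (\<chi> p q. L (\<chi> i j. X $ (fst p, i) $ (fst q, j)) $ snd p $ snd q)"

definition two_positive :: "(complex^'n^'n \<Rightarrow> complex^'m^'m) \<Rightarrow> bool" where
  "two_positive L \<longleftrightarrow> positive_map (id2_tensor L)"

definition psi_vec :: "complex^'n \<Rightarrow> complex^'n \<Rightarrow> complex^(2 \<times> 'n)" where
  "psi_vec b0 b1 = (\<chi> p. if fst p = 0 then b0 $ snd p else b1 $ snd p)"

definition proj :: "complex^'k \<Rightarrow> complex^'k^'k" where
  "proj v = (\<chi> p q. v $ p * cnj (v $ q))"

end

theory Submission
  imports Defs
begin

text \<open>Every positive semidefinite X on H_2 \<otimes> H_n is a sum of rank-one projections
  |v\<rangle>\<langle>v| (Cholesky factorisation), so 2-positivity only has to be tested on these.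
  Writing v = |0\<rangle>|a\<rangle> + |1\<rangle>|b\<rangle>, the vectors a and b lie in the span of an orthonormal pair
  \<beta>0, \<beta>1 (this is where n \<ge> 2 is used), so v = (A \<otimes> 1) \<Psi>^\<beta> for a 2 \<times> 2 matrix A.
  As 1_2 \<otimes> \<Lambda> commutes with conjugation by A \<otimes> 1, the image of |v\<rangle>\<langle>v| is
  (A \<otimes> 1) (1_2 \<otimes> \<Lambda>)(|\<Psi>^\<beta>\<rangle>\<langle>\<Psi>^\<beta>|) (A \<otimes> 1)^*, which is positive semidefinite
  together with (1_2 \<otimes> \<Lambda>)(|\<Psi>^\<beta>\<rangle>\<langle>\<Psi>^\<beta>|).\<close>

text \<open>The library enumerates the type 2 as 1, 2, whereas psi_vec indexes it by 0 and 1.\<close>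
lemma two_eq_zero_in_2: "(2 :: 2) = 0"
  by simp

lemma sum_UNIV_2: "sum f (UNIV :: 2 set) = f 0 + f 1"
  unfolding sum_2 two_eq_zero_in_2 by (rule add.commute)

lemma sum_UNIV_prod: "(\<Sum>p\<in>UNIV. f p) = (\<Sum>u\<in>UNIV. \<Sum>k\<in>UNIV. f (u, k))"
  by (subst UNIV_Times_UNIV[symmetric]) (rule sum.cartesian_product')

definition quad_form :: "complex^'k^'k \<Rightarrow> complex^'k \<Rightarrow> complex" where
  "quad_form A x = (\<Sum>i\<in>UNIV. \<Sum>j\<in>UNIV. cnj (x $ i) * A $ i $ j * x $ j)"

lemma psd_iff_quad_form: "psd A \<longleftrightarrow> (\<forall>x. Im (quad_form A x) = 0 \<and> Re (quad_form A x) \<ge> 0)"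
  unfolding psd_def quad_form_def Let_def ..

lemma quad_form_eq_cinner: "quad_form A x = cinner x (A *v x)"
  unfolding quad_form_def cinner_def matrix_vector_mult_def
  by (simp add: sum_distrib_left mult.assoc)

lemma quad_form_add: "quad_form (A + B) x = quad_form A x + quad_form B x"
  unfolding quad_form_def by (simp add: distrib_left distrib_right sum.distrib)

lemma quad_form_diff: "quad_form (A - B) x = quad_form A x - quad_form B x"
  using quad_form_add[of "A - B" B x] by simp

lemma quad_form_proj: "quad_form (proj v) x = cnj (cinner v x) * cinner v x"
  unfolding quad_form_def proj_def cinner_def by (simp add: sum_product mult_ac)

lemma quad_form_supported:
  assumes "\<And>k. k \<notin> S \<Longrightarrow> x $ k = 0"
  shows "quad_form A x = (\<Sum>i\<in>S. \<Sum>j\<in>S. cnj (x $ i) * A $ i $ j * x $ j)"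
  unfolding quad_form_def using assms
  by (intro sum.mono_neutral_cong_right) (auto intro!: sum.mono_neutral_cong_right sum.neutral)

lemma quad_form_single_entry:
  "quad_form A (\<chi> k. if k = i then a else 0) = cnj a * A $ i $ i * a"
  by (subst quad_form_supported[of "{i}"]) auto

lemma quad_form_two_entries:
  assumes "i \<noteq> j"
  shows "quad_form A (\<chi> k. if k = i then a else if k = j then b else 0) =
     cnj a * A $ i $ i * a + cnj a * A $ i $ j * b + cnj b * A $ j $ i * a + cnj b * A $ j $ j * b"
  using assms by (subst quad_form_supported[of "{i, j}"]) auto

lemma psd_add: "psd A \<Longrightarrow> psd B \<Longrightarrow> psd (A + B)"
  unfolding psd_iff_quad_form quad_form_add by simp

lemma psd_sum: "(\<And>i. i \<in> S \<Longrightarrow> psd (f i)) \<Longrightarrow> psd (sum f S)"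
proof (induction S rule: infinite_finite_induct)
  case (insert x F)
  then show ?case by (simp add: psd_add)
qed (simp_all add: psd_iff_quad_form quad_form_def)

lemma psd_proj: "psd (proj v)"
  unfolding psd_iff_quad_form quad_form_proj by simp

lemma psd_diag:
  assumes "psd A"
  shows "Im (A $ i $ i) = 0" and "Re (A $ i $ i) \<ge> 0"
proof -
  have "quad_form A (\<chi> k. if k = i then 1 else 0) = A $ i $ i"
    by (simp add: quad_form_single_entry)
  then show "Im (A $ i $ i) = 0" "Re (A $ i $ i) \<ge> 0"
    using assms unfolding psd_iff_quad_form by metis+
qed

lemma psd_hermitian:
  assumes "psd A"
  shows "A $ j $ i = cnj (A $ i $ j)"
proof (cases "i = j")
  case True
  then show ?thesis using psd_diag(1)[OF assms, of j] by (simp add: complex_eq_iff)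
next
  case False
  let ?x = "\<lambda>c. (\<chi> k. if k = i then 1 else if k = j then c else 0) :: complex^_"
  have "Im (quad_form A (?x 1)) = 0" "Im (quad_form A (?x \<i>)) = 0"
    using assms unfolding psd_iff_quad_form by blast+
  then have "Im (A $ i $ j) + Im (A $ j $ i) = 0" "Re (A $ i $ j) - Re (A $ j $ i) = 0"
    using psd_diag(1)[OF assms, of i] psd_diag(1)[OF assms, of j]
    by (simp_all add: quad_form_two_entries[OF False])
  then show ?thesis by (simp add: complex_eq_iff)
qed

lemma psd_zero_diag_row:
  assumes "psd A" and "A $ r $ r = 0"
  shows "A $ r $ j = 0"
proof (rule ccontr)
  define z where "z = A $ r $ j"
  assume "A $ r $ j \<noteq> 0"
  then have "j \<noteq> r" and z_pos: "(cmod z)\<^sup>2 > 0" using assms(2) by (auto simp: z_def)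
  \<comment> \<open>At t e_r + e_j the form is 2 Re (cnj t z) + A_jj, negative for t a large multiple of -z.\<close>
  define c where "c = (Re (A $ j $ j) + 1) / (2 * (cmod z)\<^sup>2)"
  define t where "t = - complex_of_real c * z"
  have "Re (quad_form A (\<chi> k. if k = r then t else if k = j then 1 else 0)) \<ge> 0"
    using assms(1) unfolding psd_iff_quad_form by blast
  also have "quad_form A (\<chi> k. if k = r then t else if k = j then 1 else 0) =
      cnj t * z + cnj z * t + A $ j $ j"
    using \<open>j \<noteq> r\<close> assms(2) psd_hermitian[OF assms(1), of r j]
    by (simp add: quad_form_two_entries z_def)
  also have "Re \<dots> = - 2 * c * (cmod z)\<^sup>2 + Re (A $ j $ j)"
    unfolding cmod_power2 by (simp add: t_def power2_eq_square algebra_simps)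
  also have "\<dots> = -1"
    using z_pos by (simp add: c_def field_simps)
  finally show False by simp
qed

lemma quad_form_cong_off_index:
  assumes "\<And>j. Z $ r $ j = 0" and "\<And>i. Z $ i $ r = 0" and "\<And>k. k \<noteq> r \<Longrightarrow> x $ k = y $ k"
  shows "quad_form Z x = quad_form Z y"
  unfolding quad_form_def
proof (intro sum.cong refl)
  fix i j
  show "cnj (x $ i) * Z $ i $ j * x $ j = cnj (y $ i) * Z $ i $ j * y $ j"
    by (cases "i = r"; cases "j = r") (simp_all add: assms)
qed

text \<open>One Cholesky step: X - proj v is the Schur complement of the pivot X_rr.\<close>
lemma psd_minus_proj_column:
  assumes X: "psd X" and pos: "Re (X $ r $ r) > 0"
  defines "v \<equiv> (\<chi> i. X $ i $ r / complex_of_real (sqrt (Re (X $ r $ r))))"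
  shows "psd (X - proj v)" and "(X - proj v) $ r $ j = 0" and "(X - proj v) $ i $ r = 0"
proof -
  define s where "s = sqrt (Re (X $ r $ r))"
  have pivot: "X $ r $ r = complex_of_real s * complex_of_real s"
    using psd_diag(1)[OF X, of r] pos by (simp add: s_def complex_eq_iff)
  have "s > 0" using pos by (simp add: s_def)
  have hermitian: "cnj (X $ j $ r) = X $ r $ j" for j
    using psd_hermitian[OF X, of r j] by simp
  have entry: "(X - proj v) $ i $ j = X $ i $ j - X $ i $ r * X $ r $ j / X $ r $ r" for i j
    using \<open>s > 0\<close> by (simp add: v_def proj_def hermitian pivot s_def[symmetric])
  show row: "(X - proj v) $ r $ j = 0" for j
    unfolding entry using pos by auto
  show col: "(X - proj v) $ i $ r = 0" for i
    unfolding entry using pos by auto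
  show "psd (X - proj v)"
    unfolding psd_iff_quad_form
  proof
    fix x :: "complex^'a"
    \<comment> \<open>Changing x_r does not change the form of X - proj v; choose it so that cinner v y = 0.\<close>
    define c where "c = (\<Sum>j\<in>UNIV. X $ r $ j * x $ j) / X $ r $ r"
    define y where "y = (\<chi> k. x $ k - (if k = r then c else 0))"
    have "(\<Sum>j\<in>UNIV. X $ r $ j * y $ j) = (\<Sum>j\<in>UNIV. X $ r $ j * x $ j) - X $ r $ r * c"
      by (simp add: y_def right_diff_distrib sum_subtractf if_distrib[of "\<lambda>t. _ * t"]
          cong: if_cong)
    also have "\<dots> = 0"
      using pos by (auto simp: c_def)
    finally have "cinner v y = 0"
      by (simp add: cinner_def v_def hermitian sum_divide_distrib[symmetric])
    then have "quad_form (X - proj v) x = quad_form X y"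
      using quad_form_cong_off_index[of "X - proj v" r x y, OF row col]
      by (simp add: y_def quad_form_diff quad_form_proj)
    then show "Im (quad_form (X - proj v) x) = 0 \<and> Re (quad_form (X - proj v) x) \<ge> 0"
      using X unfolding psd_iff_quad_form by simp
  qed
qed

lemma proj_0: "proj 0 = 0"
  by (simp add: proj_def vec_eq_iff)

lemma psd_split_column:
  assumes X: "psd X"
  obtains v where "psd (X - proj v)"
    and "\<And>j. (X - proj v) $ r $ j = 0" and "\<And>i. (X - proj v) $ i $ r = 0"
    and "\<And>i. X $ i $ r = 0 \<Longrightarrow> v $ i = 0"
proof (cases "Re (X $ r $ r) > 0")
  case True
  show ?thesis
    by (rule that[OF psd_minus_proj_column[OF X True]]) simp_all
next
  case False
  then have "X $ r $ r = 0"
    using psd_diag[OF X, of r] by (simp add: complex_eq_iff)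
  then have "X $ r $ j = 0" "X $ i $ r = 0" for i j
    using psd_zero_diag_row[OF X] psd_hermitian[OF X, of r i] by auto
  then show ?thesis
    by (intro that[of 0]) (simp_all add: X proj_0)
qed

lemma psd_eq_sum_proj_on:
  assumes "finite S" and "psd X" and "\<And>i j. i \<notin> S \<or> j \<notin> S \<Longrightarrow> X $ i $ j = 0"
  shows "\<exists>V. X = (\<Sum>r\<in>S. proj (V r))"
  using assms
proof (induction S arbitrary: X rule: finite_induct)
  case empty
  then show ?case by (simp add: vec_eq_iff)
next
  case (insert r S)
  obtain v where v: "psd (X - proj v)" "\<And>j. (X - proj v) $ r $ j = 0" "\<And>i. (X - proj v) $ i $ r = 0"
    "\<And>i. X $ i $ r = 0 \<Longrightarrow> v $ i = 0"
    using psd_split_column[OF insert.prems(1)] by blast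
  have "(X - proj v) $ i $ j = 0" if "i \<notin> S \<or> j \<notin> S" for i j
  proof (cases "i = r \<or> j = r")
    case False
    then have "X $ i $ j = 0" and "v $ i = 0 \<or> v $ j = 0"
      using that insert.prems(2) v(4) by auto
    then show ?thesis by (auto simp: proj_def)
  qed (use v(2,3) in auto)
  then obtain V where V: "X - proj v = (\<Sum>k\<in>S. proj (V k))"
    using insert.IH[OF v(1)] by blast
  have "(\<Sum>k\<in>S. proj ((V(r := v)) k)) = (\<Sum>k\<in>S. proj (V k))"
    using insert.hyps by (intro sum.cong) auto
  then have "X = (\<Sum>k\<in>insert r S. proj ((V(r := v)) k))"
    using insert.hyps V by (simp add: algebra_simps)
  then show ?case by blast
qed

lemma psd_eq_sum_proj:
  fixes X :: "complex^'k^'k"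
  assumes "psd X"
  obtains V where "X = (\<Sum>r\<in>(UNIV :: 'k set). proj (V r))"
  using psd_eq_sum_proj_on[of UNIV X] assms that by auto

definition mat_adjoint :: "complex^'k^'l \<Rightarrow> complex^'l^'k" where
  "mat_adjoint T = (\<chi> i j. cnj (T $ j $ i))"

lemma cinner_mat_adjoint: "cinner x (T *v y) = cinner (mat_adjoint T *v x) y"
proof -
  have "cinner x (T *v y) = (\<Sum>i\<in>UNIV. \<Sum>j\<in>UNIV. cnj (x $ i) * T $ i $ j * y $ j)"
    by (simp add: cinner_def matrix_vector_mult_def sum_distrib_left mult.assoc)
  also have "\<dots> = (\<Sum>j\<in>UNIV. \<Sum>i\<in>UNIV. cnj (x $ i) * T $ i $ j * y $ j)"
    by (rule sum.swap)
  also have "\<dots> = cinner (mat_adjoint T *v x) y"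
    by (simp add: cinner_def matrix_vector_mult_def mat_adjoint_def sum_distrib_left
        sum_distrib_right mult_ac)
  finally show ?thesis .
qed

lemma proj_matrix_vector_mult: "proj (T *v w) = T ** proj w ** mat_adjoint T"
  unfolding proj_def mat_adjoint_def matrix_vector_mult_def matrix_matrix_mult_def
  by (simp add: vec_eq_iff sum_distrib_left sum_distrib_right mult_ac sum_product)

lemma quad_form_congruence:
  "quad_form (T ** Y ** mat_adjoint T) x = quad_form Y (mat_adjoint T *v x)"
proof -
  have "(T ** Y ** mat_adjoint T) *v x = T *v (Y *v (mat_adjoint T *v x))"
    by (simp only: matrix_vector_mul_assoc[symmetric])
  then show ?thesis
    by (simp only: quad_form_eq_cinner cinner_mat_adjoint)
qed

lemma psd_congruence: "psd Y \<Longrightarrow> psd (T ** Y ** mat_adjoint T)"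
  unfolding psd_iff_quad_form quad_form_congruence by blast

text \<open>tensor_id A is the operator A \<otimes> 1 from H_b \<otimes> H_k to H_a \<otimes> H_k.\<close>
definition tensor_id :: "complex^'b^'a \<Rightarrow> complex^('b \<times> 'k::finite)^('a \<times> 'k)" where
  "tensor_id A = (\<chi> p q. if snd p = snd q then A $ fst p $ fst q else 0)"

lemma tensor_id_mult_entry:
  "(tensor_id A ** X) $ (s, i) $ q = (\<Sum>u\<in>UNIV. A $ s $ u * X $ (u, i) $ q)"
  unfolding matrix_matrix_mult_def tensor_id_def sum_UNIV_prod
  by (simp add: if_distrib[of "\<lambda>z. z * _"] cong: if_cong)

lemma mult_adjoint_tensor_id_entry:
  "(Y ** mat_adjoint (tensor_id A)) $ p $ (t, j) = (\<Sum>v\<in>UNIV. Y $ p $ (v, j) * cnj (A $ t $ v))"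
  unfolding matrix_matrix_mult_def tensor_id_def mat_adjoint_def sum_UNIV_prod
  by (simp add: if_distrib[of cnj] if_distrib[of "\<lambda>z. _ * z"] cong: if_cong)

lemma tensor_id_congruence_entry:
  "(tensor_id A ** X ** mat_adjoint (tensor_id A)) $ (s, i) $ (t, j) =
     (\<Sum>u\<in>UNIV. \<Sum>v\<in>UNIV. A $ s $ u * cnj (A $ t $ v) * X $ (u, i) $ (v, j))"
proof -
  have "(tensor_id A ** X ** mat_adjoint (tensor_id A)) $ (s, i) $ (t, j) =
      (\<Sum>v\<in>UNIV. \<Sum>u\<in>UNIV. A $ s $ u * cnj (A $ t $ v) * X $ (u, i) $ (v, j))"
    by (simp add: mult_adjoint_tensor_id_entry tensor_id_mult_entry sum_distrib_left
        sum_distrib_right mult_ac)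
  also have "\<dots> = (\<Sum>u\<in>UNIV. \<Sum>v\<in>UNIV. A $ s $ u * cnj (A $ t $ v) * X $ (u, i) $ (v, j))"
    by (rule sum.swap)
  finally show ?thesis .
qed

lemma clinear_map_mscale: "clinear_map L \<Longrightarrow> L (mscale c A) = mscale c (L A)"
  unfolding clinear_map_def by blast

lemma mscale_entry: "mscale c A $ i $ j = c * A $ i $ j"
  by (simp add: mscale_def)

lemma mscale_0: "mscale 0 A = 0"
  by (simp add: mscale_def vec_eq_iff)

lemma clinear_map_0: "clinear_map L \<Longrightarrow> L 0 = 0"
  using clinear_map_mscale[of L 0 0] by (simp add: mscale_0)

lemma clinear_map_sum: "clinear_map L \<Longrightarrow> L (sum f S) = (\<Sum>x\<in>S. L (f x))"
  by (induction S rule: infinite_finite_induct) (auto simp: clinear_map_0 clinear_map_def)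

definition block :: "complex^('a::finite \<times> 'k::finite)^('a \<times> 'k) \<Rightarrow> 'a \<Rightarrow> 'a \<Rightarrow> complex^'k^'k" where
  "block X s t = (\<chi> i j. X $ (s, i) $ (t, j))"

lemma id2_tensor_entry: "id2_tensor L X $ (s, i) $ (t, j) = L (block X s t) $ i $ j"
  by (simp add: id2_tensor_def block_def)

lemma block_add: "block (X + Y) s t = block X s t + block Y s t"
  by (simp add: block_def vec_eq_iff)

lemma block_mscale: "block (mscale c X) s t = mscale c (block X s t)"
  by (simp add: block_def mscale_def vec_eq_iff)

lemma block_tensor_id_congruence:
  "block (tensor_id A ** X ** mat_adjoint (tensor_id A)) s t =
     (\<Sum>u\<in>UNIV. \<Sum>v\<in>UNIV. mscale (A $ s $ u * cnj (A $ t $ v)) (block X u v))"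
  by (simp add: block_def vec_eq_iff tensor_id_congruence_entry mscale_entry sum_component)

lemma clinear_map_id2_tensor: "clinear_map L \<Longrightarrow> clinear_map (id2_tensor L)"
  unfolding clinear_map_def
  by (simp add: vec_eq_iff split_paired_All id2_tensor_entry block_add block_mscale mscale_entry)

lemma id2_tensor_congruence:
  fixes A :: "complex^2^2"
  assumes "clinear_map L"
  shows "id2_tensor L (tensor_id A ** X ** mat_adjoint (tensor_id A)) =
    tensor_id A ** id2_tensor L X ** mat_adjoint (tensor_id A)"
  by (simp add: vec_eq_iff split_paired_All id2_tensor_entry block_tensor_id_congruence
      tensor_id_congruence_entry clinear_map_sum[OF assms] clinear_map_mscale[OF assms]
      mscale_entry sum_component)

lemma cinner_smult_left: "cinner (c *s x) y = cnj c * cinner x y"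
  unfolding cinner_def by (simp add: sum_distrib_left mult_ac)

lemma cinner_smult_right: "cinner x (c *s y) = c * cinner x y"
  unfolding cinner_def by (simp add: sum_distrib_left mult_ac)

lemma cinner_diff_right: "cinner x (y - z) = cinner x y - cinner x z"
  unfolding cinner_def by (simp add: algebra_simps sum_subtractf)

lemma cinner_self: "cinner x x = complex_of_real (\<Sum>i\<in>UNIV. (cmod (x $ i))\<^sup>2)"
  unfolding cinner_def of_real_sum
  by (intro sum.cong refl) (simp only: complex_norm_square mult.commute)

lemma cinner_self_eq_0_iff: "cinner x x = 0 \<longleftrightarrow> x = 0"
  unfolding cinner_self of_real_eq_0_iff by (simp add: sum_nonneg_eq_0_iff vec_eq_iff)

lemma unit_multiple:
  assumes "x \<noteq> 0"
  obtains c u where "cinner u u = 1" and "x = c *s u" and "c \<noteq> 0"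
proof -
  define c where "c = complex_of_real (sqrt (\<Sum>i\<in>UNIV. (cmod (x $ i))\<^sup>2))"
  have "cinner x x = c * c"
    by (simp add: cinner_self c_def sum_nonneg flip: of_real_mult)
  moreover have "c \<noteq> 0"
    using assms calculation cinner_self_eq_0_iff[of x] by auto
  moreover have "cnj c = c"
    by (simp add: c_def)
  ultimately show ?thesis
    by (intro that[where c = c and u = "inverse c *s x"])
      (simp_all add: cinner_smult_left cinner_smult_right vec_eq_iff field_simps)
qed

lemma exists_unit_orthogonal:
  fixes u :: "complex^'n"
  assumes "CARD('n) \<ge> 2"
  obtains w where "cinner w w = 1" and "cinner u w = 0"
proof -
  obtain i j :: 'n where "i \<noteq> j"
  proof -
    have "\<not> CARD('n) \<le> Suc 0"
      using assms by simp
    then show ?thesis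
      using that by (auto simp: card_le_Suc0_iff_eq)
  qed
  show ?thesis
  proof (cases "u $ i = 0")
    case True
    show ?thesis
      by (rule that[of "\<chi> k. if k = i then 1 else 0"])
        (simp_all add: cinner_def True if_distrib cong: if_cong)
  next
    case False
    \<comment> \<open>cnj (u_j) e_i - cnj (u_i) e_j is orthogonal to u, and nonzero as u_i \<noteq> 0.\<close>
    define w where "w = (\<chi> k. if k = i then cnj (u $ j) else if k = j then - cnj (u $ i) else 0)"
    have "cinner u w = (\<Sum>k\<in>{i, j}. cnj (u $ k) * w $ k)"
      unfolding cinner_def by (rule sum.mono_neutral_right) (auto simp: w_def)
    then have "cinner u w = 0"
      using \<open>i \<noteq> j\<close> by (simp add: w_def)
    moreover have "w \<noteq> 0"
      using \<open>i \<noteq> j\<close> False by (auto simp: w_def vec_eq_iff dest: spec[of _ j])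
    ultimately obtain c w' where "cinner w' w' = 1" "w = c *s w'" "c \<noteq> 0"
      using unit_multiple by blast
    then show ?thesis
      using that \<open>cinner u w = 0\<close> by (simp add: cinner_smult_right)
  qed
qed

lemma orthonormal_pair_spanning:
  fixes a b :: "complex^'n"
  assumes "CARD('n) \<ge> 2"
  obtains \<beta>0 \<beta>1 c00 c01 c10 c11
  where "cinner \<beta>0 \<beta>0 = 1" and "cinner \<beta>1 \<beta>1 = 1" and "cinner \<beta>0 \<beta>1 = 0"
    and "a = c00 *s \<beta>0 + c01 *s \<beta>1" and "b = c10 *s \<beta>0 + c11 *s \<beta>1"
proof -
  obtain \<beta>0 c where \<beta>0: "cinner \<beta>0 \<beta>0 = 1" and a: "a = c *s \<beta>0"
  proof (cases "a = 0")
    case True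
    obtain u :: "complex^'n" where "cinner u u = 1" "cinner 0 u = 0"
      by (rule exists_unit_orthogonal[of 0, OF assms])
    then show ?thesis
      using True by (intro that[where c = 0]) (simp_all add: vec_eq_iff)
  next
    case False
    then obtain c u where "cinner u u = 1" "a = c *s u"
      by (rule unit_multiple)
    then show ?thesis
      by (rule that)
  qed
  define b' where "b' = b - cinner \<beta>0 b *s \<beta>0"
  have "cinner \<beta>0 b' = 0"
    by (simp add: b'_def cinner_diff_right cinner_smult_right \<beta>0)
  obtain \<beta>1 d where \<beta>1: "cinner \<beta>1 \<beta>1 = 1" "cinner \<beta>0 \<beta>1 = 0" and b': "b' = d *s \<beta>1"
  proof (cases "b' = 0")
    case True
    obtain w where "cinner w w = 1" "cinner \<beta>0 w = 0"
      by (rule exists_unit_orthogonal[of \<beta>0, OF assms])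
    then show ?thesis
      using True by (intro that[where d = 0]) (simp_all add: vec_eq_iff)
  next
    case False
    then obtain d u where "cinner u u = 1" "b' = d *s u" "d \<noteq> 0"
      by (rule unit_multiple)
    moreover have "cinner \<beta>0 u = 0"
      using calculation \<open>cinner \<beta>0 b' = 0\<close> by (simp add: cinner_smult_right)
    ultimately show ?thesis
      by (intro that) simp_all
  qed
  have "a = c *s \<beta>0 + 0 *s \<beta>1"
    using a by (simp add: vec_eq_iff)
  moreover have "b = cinner \<beta>0 b *s \<beta>0 + d *s \<beta>1"
    unfolding b'[symmetric] b'_def by simp
  ultimately show ?thesis
    using \<beta>0 \<beta>1 by (intro that)
qed

lemma psi_vec_components: "psi_vec (\<chi> i. v $ (0, i)) (\<chi> i. v $ (1, i)) = v"
  by (simp add: psi_vec_def vec_eq_iff split_paired_All forall_2 two_eq_zero_in_2)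

lemma tensor_id_mult_psi_vec:
  "tensor_id A *v psi_vec \<beta>0 \<beta>1 =
     psi_vec (A $ 0 $ 0 *s \<beta>0 + A $ 0 $ 1 *s \<beta>1) (A $ 1 $ 0 *s \<beta>0 + A $ 1 $ 1 *s \<beta>1)"
  unfolding matrix_vector_mult_def tensor_id_def sum_UNIV_prod
  by (simp add: vec_eq_iff split_paired_All forall_2 two_eq_zero_in_2 psi_vec_def sum_UNIV_2
      if_distrib[of "\<lambda>z. z * _"] cong: if_cong)

lemma psd_id2_tensor_proj:
  fixes L :: "complex^'n^'n \<Rightarrow> complex^'m^'m" and v :: "complex^(2 \<times> 'n)"
  assumes "CARD('n) \<ge> 2" and L: "clinear_map L"
    and psi: "\<And>\<beta>0 \<beta>1. cinner \<beta>0 \<beta>0 = 1 \<Longrightarrow> cinner \<beta>1 \<beta>1 = 1 \<Longrightarrow> cinner \<beta>0 \<beta>1 = 0 \<Longrightarrow>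
      psd (id2_tensor L (proj (psi_vec \<beta>0 \<beta>1)))"
  shows "psd (id2_tensor L (proj v))"
proof -
  obtain \<beta>0 \<beta>1 c00 c01 c10 c11
    where orth: "cinner \<beta>0 \<beta>0 = 1" "cinner \<beta>1 \<beta>1 = 1" "cinner \<beta>0 \<beta>1 = 0"
      and a: "(\<chi> i. v $ (0, i)) = c00 *s \<beta>0 + c01 *s \<beta>1"
      and b: "(\<chi> i. v $ (1, i)) = c10 *s \<beta>0 + c11 *s \<beta>1"
    by (rule orthonormal_pair_spanning[OF assms(1)])
  define A :: "complex^2^2" where
    "A = (\<chi> s u. if s = 0 then (if u = 0 then c00 else c01) else (if u = 0 then c10 else c11))"
  have "tensor_id A *v psi_vec \<beta>0 \<beta>1 = psi_vec (\<chi> i. v $ (0, i)) (\<chi> i. v $ (1, i))"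
    unfolding tensor_id_mult_psi_vec a b by (simp add: A_def)
  then have "v = tensor_id A *v psi_vec \<beta>0 \<beta>1"
    by (simp add: psi_vec_components)
  then have "id2_tensor L (proj v) =
      tensor_id A ** id2_tensor L (proj (psi_vec \<beta>0 \<beta>1)) ** mat_adjoint (tensor_id A)"
    by (simp add: proj_matrix_vector_mult id2_tensor_congruence[OF L])
  then show ?thesis
    by (simp add: psd_congruence psi orth)
qed

theorem lemma7:
  fixes L :: "complex^'n^'n \<Rightarrow> complex^'m^'m"
  assumes "CARD('n) \<ge> 2"
    and "clinear_map L"
    and "positive_map L"
  shows "two_positive L \<longleftrightarrow>
    (\<forall>b0 b1 :: complex^'n. cinner b0 b0 = 1 \<and> cinner b1 b1 = 1 \<and> cinner b0 b1 = 0
        \<longrightarrow> psd (id2_tensor L (proj (psi_vec b0 b1))))"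
proof
  assume "two_positive L"
  then show "\<forall>b0 b1 :: complex^'n. cinner b0 b0 = 1 \<and> cinner b1 b1 = 1 \<and> cinner b0 b1 = 0
      \<longrightarrow> psd (id2_tensor L (proj (psi_vec b0 b1)))"
    unfolding two_positive_def positive_map_def using psd_proj by blast
next
  assume psi: "\<forall>b0 b1 :: complex^'n. cinner b0 b0 = 1 \<and> cinner b1 b1 = 1 \<and> cinner b0 b1 = 0
      \<longrightarrow> psd (id2_tensor L (proj (psi_vec b0 b1)))"
  show "two_positive L"
    unfolding two_positive_def positive_map_def
  proof (intro allI impI)
    fix X :: "complex^(2 \<times> 'n)^(2 \<times> 'n)"
    assume "psd X"
    then obtain V where "X = (\<Sum>r\<in>(UNIV :: (2 \<times> 'n) set). proj (V r))"
      by (rule psd_eq_sum_proj)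
    then have "id2_tensor L X = (\<Sum>r\<in>UNIV. id2_tensor L (proj (V r)))"
      by (simp add: clinear_map_sum[OF clinear_map_id2_tensor[OF assms(2)]])
    moreover have "psd (id2_tensor L (proj (V r)))" for r
      by (rule psd_id2_tensor_proj[OF assms(1,2)]) (use psi in blast)
    ultimately show "psd (id2_tensor L X)"
      by (simp add: psd_sum)
  qed
qed

end
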